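(* For all integers $m,k\ge 0$, $$\zeta(\bar 1,\{1\}_m,\bar 1,\{1\}_k)=(-1)^{m+1}\,\mathrm{Li}_{k+2,\{1\}_m}\!\left(\tfrac12\right).$$
   Context: For nonzero integers $s_1,\dots,s_k$, with $\operatorname{sgn}(s)=1$ if $s>0$ and $-1$ if $s<0$, the multiple zeta value is $\zeta(s_1,\dots,s_k)=\sum_{n_1>n_2>\cdots>n_k\ge 1}\prod_{j=1}^k n_j^{-|s_j|}\operatorname{sgn}(s_j)^{n_j}$. A barred entry $\bar p$ denotes the negative entry $-p$. The notation $\{1\}_d$ means the entry $1$ repeated $d$ times ($d=0$ means no entries). For positive integers $s_1,\dots,s_r$ and $0\le x<1$, the multiple polylogarithm is $\mathrm{Li}_{s_1,\dots,s_r}(x)=\sum_{n_1>\cdots>n_r>0}\frac{x^{n_1}}{n_1^{s_1}\cdots n_r^{s_r}}$. *)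

theory Defs
  imports Complex_Main
begin

definition mzv_term :: "int \<Rightarrow> nat \<Rightarrow> real" where
  "mzv_term s n = (if s < 0 then (-1) ^ n else 1) / real n ^ nat \<bar>s\<bar>"

text \<open>Truncated nested sum over N > n_1 > n_2 > ... > n_k \<ge> 1.\<close>
fun mzv_partial :: "int list \<Rightarrow> nat \<Rightarrow> real" where
  "mzv_partial [] N = 1"
| "mzv_partial (s # ss) N = (\<Sum>n\<in>{1..<N}. mzv_term s n * mzv_partial ss n)"

definition mzv :: "int list \<Rightarrow> real" where
  "mzv s = lim (\<lambda>N. mzv_partial s N)"

fun mpl_partial :: "nat list \<Rightarrow> real \<Rightarrow> nat \<Rightarrow> real" where
  "mpl_partial [] x N = 1"
| "mpl_partial (s # ss) x N =
     (\<Sum>n\<in>{1..<N}. x ^ n / real n ^ s * mzv_partial (map int ss) n)"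

definition mpl :: "nat list \<Rightarrow> real \<Rightarrow> real" where
  "mpl s x = lim (\<lambda>N. mpl_partial s x N)"

end

theory Submission
  imports Defs "HOL-Analysis.Analysis" "HOL-Real_Asymp.Real_Asymp"
begin

text \<open>
  Write Li(s_1, ..., s_r; z) for the power series
  sum_{n_1 > ... > n_r >= 1} z^{n_1} prod_j sgn(s_j)^{n_j} / n_j^{|s_j|}. By Abel's theorem
  zeta(-1, A) is the limit of Li(-1, A; x) as x -> 1-, once the alternating series is known to
  converge. Differentiation strips the first entry: Li(1, A)' = Li(A) / (1 - z) and
  Li(a + 1, A)' = Li(a, A) / z; moreover Li({1}_k; z) = v(z)^k / k! with v(z) = -log(1 - z).

  For Phi_j(x) = (-1)^j Li({1}_j, -1, {1}_k; -x) this gives Phi_0 = v^(k+1) / (k+1)! and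
  Phi_(j+1)' = Phi_j / (1 + x). With u(x) = v((1 - x) / 2) the function
    Psi(x) = sum_{j <= m+1} u^j / j! Phi_(m+1-j)(x)
           + sum_{i <= k} Li_{i+2, {1}_m}((1 - x) / 2) v(x)^(k-i) / (k-i)!
  has derivative 0 on (-1, 1), so Psi = Psi(0) = Li_{k+2, {1}_m}(1/2). As x -> 1- all summands
  but Phi_(m+1)(x) are nonnegative and tend to 0, because u(x) <= 1 - x beats every power of
  v(x). Hence zeta(-1, {1}_m, -1, {1}_k) = (-1)^(m+1) Phi_(m+1)(1-) = (-1)^(m+1) Li_{k+2, {1}_m}(1/2).
\<close>

section \<open>Elementary analysis\<close>

lemma sum_inverse_sqrt_le: "(\<Sum>j=1..n. 1 / sqrt (real j)) \<le> 2 * sqrt (real n)"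
proof (induction n)
  case (Suc n)
  define a where "a = sqrt (real n)"
  define b where "b = sqrt (real n + 1)"
  have "a \<ge> 0" "b > 0" "b * b = a * a + 1" by (auto simp: a_def b_def)
  then have "2 * a * b + 1 \<le> 2 * (b * b)"
    using zero_le_power2[of "a - b"] by (simp add: power2_eq_square algebra_simps)
  then have step: "2 * a + 1 / b \<le> 2 * b"
    using \<open>b > 0\<close> by (simp add: field_simps)
  have "(\<Sum>j=1..Suc n. 1 / sqrt (real j)) = (\<Sum>j=1..n. 1 / sqrt (real j)) + 1 / b"
    by (simp add: b_def add.commute)
  also have "\<dots> \<le> 2 * b"
    using Suc.IH step by (simp add: a_def)
  finally show ?case by (simp add: b_def add.commute)
qed simp

lemma sum_sqrt_Suc_div_le: "(\<Sum>j\<in>{1..<n}. sqrt (real j + 1) / real j) \<le> 3 * sqrt (real n + 1)"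
proof -
  have "sqrt (real j + 1) / real j \<le> 3 / 2 * (1 / sqrt (real j))" if "j \<ge> 1" for j
  proof -
    have "(real j + 1) * real j \<le> (3 / 2 * real j)\<^sup>2"
      using that by (simp add: power2_eq_square algebra_simps)
    then have "sqrt (real j + 1) * sqrt (real j) \<le> 3 / 2 * real j"
      by (metis real_sqrt_le_mono real_sqrt_mult real_sqrt_unique mult_nonneg_nonneg
          of_nat_0_le_iff zero_le_divide_iff zero_le_numeral)
    then show ?thesis using that by (simp add: field_simps)
  qed
  then have "(\<Sum>j\<in>{1..<n}. sqrt (real j + 1) / real j) \<le> 3 / 2 * (\<Sum>j\<in>{1..<n}. 1 / sqrt (real j))"
    unfolding sum_distrib_left by (intro sum_mono) auto
  also have "\<dots> \<le> 3 / 2 * (\<Sum>j=1..n. 1 / sqrt (real j))"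
    by (intro mult_left_mono sum_mono2) auto
  also have "\<dots> \<le> 3 / 2 * (2 * sqrt (real n))"
    by (intro mult_left_mono sum_inverse_sqrt_le) auto
  also have "\<dots> \<le> 3 * sqrt (real n + 1)"
    by simp
  finally show ?thesis .
qed

lemma summable_of_summable_add_Suc:
  fixes D :: "nat \<Rightarrow> real"
  assumes "D \<longlonglongrightarrow> 0" "summable (\<lambda>n. D n + D (Suc n))"
  shows "summable D"
proof -
  have "summable (\<lambda>n. ((D n + D (Suc n)) + (D n - D (Suc n))) / 2)"
    using summable_add[OF assms(2) telescope_summable'[OF assms(1)]] by (rule summable_divide)
  then show ?thesis by simp
qed

lemma abs_Abel_mean_le:
  fixes e :: "nat \<Rightarrow> real"
  assumes e: "\<And>n. n \<ge> N \<Longrightarrow> \<bar>e n\<bar> \<le> c" and x: "0 < x" "x < 1"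
  shows "\<bar>(1 - x) * (\<Sum>n. e n * x ^ n)\<bar> \<le> (1 - x) * (\<Sum>n<N. \<bar>e n\<bar>) + c"
proof -
  define g where "g n = (if n < N then \<bar>e n\<bar> else 0) + c * x ^ n" for n
  have "c \<ge> 0"
    using e[of N] by simp
  have g_sums: "g sums ((\<Sum>n<N. \<bar>e n\<bar>) + c * (1 / (1 - x)))"
    unfolding g_def[abs_def] using x
    by (intro sums_add sums_mult geometric_sums sums_If_finite_set[of "{..<N}", simplified]) auto
  have le: "norm (norm (e n * x ^ n)) \<le> g n" for n
  proof (cases "n < N")
    case True
    then show ?thesis
      using x \<open>c \<ge> 0\<close> mult_left_mono[OF power_le_one[of x n], of "\<bar>e n\<bar>"] zero_le_power[of x n]
      by (simp add: g_def abs_mult power_abs add_increasing2)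
  next
    case False
    then show ?thesis
      using x e[of n] by (simp add: g_def abs_mult power_abs mult_right_mono)
  qed
  have "summable g"
    using g_sums by (simp add: sums_iff)
  then have "summable (\<lambda>n. norm (e n * x ^ n))"
    by (rule summable_comparison_test'[of _ 0]) (rule le)
  then have "norm (\<Sum>n. e n * x ^ n) \<le> (\<Sum>n. norm (e n * x ^ n))"
    by (rule summable_norm)
  also have "\<dots> \<le> (\<Sum>n. g n)"
    using le by (intro suminf_le \<open>summable (\<lambda>n. norm (e n * x ^ n))\<close> \<open>summable g\<close>) simp
  finally have "(1 - x) * \<bar>\<Sum>n. e n * x ^ n\<bar> \<le> (1 - x) * ((\<Sum>n<N. \<bar>e n\<bar>) + c * (1 / (1 - x)))"
    using x g_sums by (intro mult_left_mono) (auto simp: sums_iff)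
  also have "\<dots> = (1 - x) * (\<Sum>n<N. \<bar>e n\<bar>) + c"
    using x by (simp add: field_simps)
  finally show ?thesis
    using x by (simp add: abs_mult)
qed

lemma Abel_mean_tendsto_0:
  fixes e :: "nat \<Rightarrow> real"
  assumes "e \<longlonglongrightarrow> 0"
  shows "((\<lambda>x. (1 - x) * (\<Sum>n. e n * x ^ n)) \<longlongrightarrow> 0) (at_left 1)"
proof (rule tendstoI)
  fix \<epsilon> :: real assume "\<epsilon> > 0"
  obtain N where N: "\<And>n. n \<ge> N \<Longrightarrow> \<bar>e n\<bar> \<le> \<epsilon> / 2"
    using LIMSEQ_D[OF assms, of "\<epsilon> / 2"] \<open>\<epsilon> > 0\<close> by (force simp: less_imp_le)
  define M where "M = (\<Sum>n<N. \<bar>e n\<bar>)"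
  have "M \<ge> 0" by (simp add: M_def sum_nonneg)
  have "eventually (\<lambda>x. x \<in> {max 0 (1 - \<epsilon> / (2 * (M + 1)))<..<1}) (at_left (1::real))"
    using \<open>\<epsilon> > 0\<close> \<open>M \<ge> 0\<close> by (intro eventually_at_left_real) auto
  then show "eventually (\<lambda>x. dist ((1 - x) * (\<Sum>n. e n * x ^ n)) 0 < \<epsilon>) (at_left 1)"
  proof eventually_elim
    case (elim x)
    then have "(1 - x) * M \<le> \<epsilon> / (2 * (M + 1)) * M"
      using \<open>M \<ge> 0\<close> by (intro mult_right_mono) auto
    also have "\<dots> < \<epsilon> / 2"
      using \<open>\<epsilon> > 0\<close> \<open>M \<ge> 0\<close> by (simp add: field_simps)
    finally show ?case
      using abs_Abel_mean_le[of N e "\<epsilon> / 2" x] N elim by (simp add: M_def)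
  qed
qed

lemma sums_partial_sums_power:
  fixes a :: "nat \<Rightarrow> real"
  assumes "summable a" "\<bar>x\<bar> < 1"
  shows "(\<lambda>n. (\<Sum>i\<le>n. a i) * x ^ n) sums ((\<Sum>n. a n * x ^ n) / (1 - x))"
proof -
  have "summable (\<lambda>n. norm (a n * x ^ n))"
    using assms by (intro powser_insidea[of _ 1]) auto
  then have "(\<lambda>n. \<Sum>i\<le>n. a i * x ^ i * x ^ (n - i)) sums ((\<Sum>n. a n * x ^ n) * (\<Sum>n. x ^ n))"
    using assms(2) by (intro Cauchy_product_sums) (auto intro!: summable_geometric simp: power_abs)
  moreover have "(\<Sum>i\<le>n. a i * x ^ i * x ^ (n - i)) = (\<Sum>i\<le>n. a i) * x ^ n" for n
    by (simp add: sum_distrib_right mult.assoc flip: power_add)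
  ultimately show ?thesis
    using suminf_geometric[of x] assms(2) by (simp add: divide_inverse)
qed

theorem Abel_limit_theorem:
  fixes a :: "nat \<Rightarrow> real"
  assumes "a sums s"
  shows "((\<lambda>x. \<Sum>n. a n * x ^ n) \<longlongrightarrow> s) (at_left 1)"
proof -
  define e where "e n = (\<Sum>i\<le>n. a i) - s" for n
  have "(\<lambda>n. \<Sum>i<Suc n. a i) \<longlonglongrightarrow> s"
    using assms unfolding sums_def by (rule LIMSEQ_Suc)
  then have "e \<longlonglongrightarrow> 0"
    unfolding e_def lessThan_Suc_atMost using tendsto_diff[OF _ tendsto_const[of s]] by fastforce
  moreover have "(\<Sum>n. a n * x ^ n) = (1 - x) * (\<Sum>n. e n * x ^ n) + s" if "0 < x" "x < 1" for x
  proof -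
    have "(\<lambda>n. e n * x ^ n) sums ((\<Sum>n. a n * x ^ n) / (1 - x) - s * (1 / (1 - x)))"
      unfolding e_def left_diff_distrib using assms that
      by (intro sums_diff sums_partial_sums_power sums_mult geometric_sums) (auto simp: sums_iff)
    then have "(\<Sum>n. e n * x ^ n) = ((\<Sum>n. a n * x ^ n) - s) / (1 - x)"
      by (simp add: sums_iff diff_divide_distrib)
    then show ?thesis
      using that by simp
  qed
  then have "eventually (\<lambda>x. (1 - x) * (\<Sum>n. e n * x ^ n) + s = (\<Sum>n. a n * x ^ n)) (at_left 1)"
    by (intro eventually_at_left_1) simp
  ultimately show ?thesis
    using Lim_transform_eventually[OF tendsto_add[OF Abel_mean_tendsto_0 tendsto_const]] by fastforce
qed

lemma has_derivative_convolution_sum: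
  fixes a b :: "nat \<Rightarrow> real \<Rightarrow> real"
  assumes "(a 0 has_field_derivative a0') (at x)" "(b 0 has_field_derivative b0') (at x)"
    and "\<And>j. (a (Suc j) has_field_derivative - r * a j x) (at x)"
    and "\<And>j. (b (Suc j) has_field_derivative r * b j x) (at x)"
  shows "((\<lambda>x. \<Sum>j\<le>n. a j x * b (n - j) x) has_field_derivative a0' * b n x + a n x * b0') (at x)"
proof -
  define a' where "a' j = (if j = 0 then a0' else - r * a (j - 1) x)" for j
  define b' where "b' j = (if j = 0 then b0' else r * b (j - 1) x)" for j
  have "(a j has_field_derivative a' j) (at x)" "(b j has_field_derivative b' j) (at x)" for j
    using assms by (cases j; simp add: a'_def b'_def)+
  then have "((\<lambda>x. \<Sum>j\<le>n. a j x * b (n - j) x) has_field_derivative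
      (\<Sum>j\<le>n. a' j * b (n - j) x + a j x * b' (n - j))) (at x)"
    by (auto intro!: DERIV_sum derivative_eq_intros)
  moreover have "(\<Sum>j\<le>n. a' j * b (n - j) x + a j x * b' (n - j)) = a0' * b n x + a n x * b0'"
    \<comment> \<open>apart from the two boundary terms, the summands cancel in pairs\<close>
  proof (cases n)
    case (Suc n')
    have "(\<Sum>j\<le>n. a' j * b (n - j) x) = a0' * b n x - (\<Sum>j\<le>n'. r * a j x * b (n' - j) x)"
      unfolding Suc sum.atMost_Suc_shift by (simp add: a'_def sum_negf)
    moreover have "(\<Sum>j\<le>n. a j x * b' (n - j)) = a n x * b0' + (\<Sum>j\<le>n'. r * a j x * b (n' - j) x)"
      unfolding Suc sum.atMost_Suc by (simp add: b'_def Suc_diff_le algebra_simps)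
    ultimately show ?thesis
      by (simp add: sum.distrib)
  qed (simp add: a'_def b'_def)
  ultimately show ?thesis by simp
qed

definition Li1 :: "real \<Rightarrow> real" where
  "Li1 x = - ln (1 - x)"

definition divpow :: "nat \<Rightarrow> real \<Rightarrow> real" where
  "divpow j t = t ^ j / fact j"

lemma divpow_0 [simp]: "divpow 0 t = 1"
  by (simp add: divpow_def)

lemma divpow_nonneg: "t \<ge> 0 \<Longrightarrow> divpow j t \<ge> 0"
  by (simp add: divpow_def)

lemma divpow_Suc_has_derivative:
  assumes "(g has_field_derivative g') (at x within S)"
  shows "((\<lambda>x. divpow (Suc j) (g x)) has_field_derivative divpow j (g x) * g') (at x within S)"
  unfolding divpow_def using DERIV_cdivide[OF DERIV_power[OF assms, of "Suc j"], of "fact (Suc j)"]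
  by (simp add: mult.commute)

lemma Li1_nonneg: "0 \<le> x \<Longrightarrow> x < 1 \<Longrightarrow> Li1 x \<ge> 0"
  by (simp add: Li1_def)

lemma Li1_le_twice: "0 \<le> y \<Longrightarrow> y \<le> 1 / 2 \<Longrightarrow> Li1 y \<le> 2 * y"
proof -
  assume y: "0 \<le> y" "y \<le> 1 / 2"
  have "Li1 y = ln (1 / (1 - y))"
    using y by (simp add: Li1_def ln_div)
  also have "\<dots> \<le> 1 / (1 - y) - 1"
    using y by (intro ln_le_minus_one) auto
  also have "\<dots> \<le> 2 * y"
    using y mult_left_mono[of "y * 2" 1 y] by (simp add: field_simps)
  finally show ?thesis .
qed

lemma Li1_has_derivative: "x < 1 \<Longrightarrow> (Li1 has_field_derivative 1 / (1 - x)) (at x within S)"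
  unfolding Li1_def[abs_def] by (auto intro!: derivative_eq_intros simp: field_simps)

lemma Li1_half_compl_has_derivative:
  assumes "\<bar>x\<bar> < 1"
  shows "((\<lambda>x. Li1 ((1 - x) / 2)) has_field_derivative - 1 / (1 + x)) (at x)"
proof -
  have "((\<lambda>x. Li1 ((1 - x) / 2)) has_field_derivative 1 / (1 - (1 - x) / 2) * (- 1 / 2)) (at x)"
    using assms by (intro DERIV_chain2[OF Li1_has_derivative]) (auto intro!: derivative_eq_intros)
  then show ?thesis
    using assms by (simp add: field_simps)
qed

lemma one_minus_mult_Li1_power_tendsto_0: "((\<lambda>x. (1 - x) * Li1 x ^ p) \<longlongrightarrow> 0) (at_left 1)"
proof -
  have "filterlim Li1 at_top (at_left 1)"
    unfolding Li1_def[abs_def] by real_asymp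
  then have "((\<lambda>x. Li1 x ^ p / exp (Li1 x)) \<longlongrightarrow> 0) (at_left 1)"
    by (rule filterlim_compose[OF tendsto_power_div_exp_0])
  moreover have "eventually (\<lambda>x. Li1 x ^ p / exp (Li1 x) = (1 - x) * Li1 x ^ p) (at_left 1)"
    by (rule eventually_at_left_1) (simp add: Li1_def exp_minus field_simps)
  ultimately show ?thesis
    by (rule Lim_transform_eventually)
qed

lemma divpow_Li1_half_compl_tendsto_0:
  "((\<lambda>x. divpow (Suc j) (Li1 ((1 - x) / 2)) * divpow p (Li1 x)) \<longlongrightarrow> 0) (at_left 1)"
proof (rule tendsto_sandwich)
  let ?u = "\<lambda>x. Li1 ((1 - x) / 2)"
  let ?h = "\<lambda>x. (1 - x) * Li1 x ^ p * ?u x ^ j / (fact (Suc j) * fact p)"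
  have bounds: "0 \<le> divpow (Suc j) (?u x) * divpow p (Li1 x)"
    "divpow (Suc j) (?u x) * divpow p (Li1 x) \<le> ?h x" if "0 < x" "x < 1" for x
  proof -
    have u: "0 \<le> ?u x" "?u x \<le> 1 - x"
      using that Li1_nonneg[of "(1 - x) / 2"] Li1_le_twice[of "(1 - x) / 2"] by auto
    have "0 \<le> Li1 x"
      using that by (intro Li1_nonneg) auto
    then show "0 \<le> divpow (Suc j) (?u x) * divpow p (Li1 x)"
      using u by (simp add: divpow_nonneg)
    have "?u x ^ Suc j \<le> (1 - x) * ?u x ^ j"
      using u by (simp add: mult_right_mono)
    then have "?u x ^ Suc j * Li1 x ^ p / (fact (Suc j) * fact p)
        \<le> (1 - x) * Li1 x ^ p * ?u x ^ j / (fact (Suc j) * fact p)"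
      using mult_left_mono[OF \<open>?u x ^ Suc j \<le> (1 - x) * ?u x ^ j\<close>, of "Li1 x ^ p"] \<open>0 \<le> Li1 x\<close>
      by (intro divide_right_mono) (simp_all add: mult_ac)
    then show "divpow (Suc j) (?u x) * divpow p (Li1 x) \<le> ?h x"
      by (simp add: divpow_def)
  qed
  show "eventually (\<lambda>x. 0 \<le> divpow (Suc j) (?u x) * divpow p (Li1 x)) (at_left 1)"
    using bounds(1) by (rule eventually_at_left_1)
  show "eventually (\<lambda>x. divpow (Suc j) (?u x) * divpow p (Li1 x) \<le> ?h x) (at_left 1)"
    using bounds(2) by (rule eventually_at_left_1)
  have "(?u \<longlongrightarrow> 0) (at_left 1)"
    unfolding Li1_def[abs_def] by real_asymp
  then have "(?h \<longlongrightarrow> 0 * 0 ^ j / (fact (Suc j) * fact p)) (at_left 1)"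
    by (intro tendsto_intros one_minus_mult_Li1_power_tendsto_0) auto
  then show "(?h \<longlongrightarrow> 0) (at_left 1)"
    by simp
qed simp

section \<open>Truncated nested sums\<close>

abbreviation nonzero_entries :: "int list \<Rightarrow> bool" where
  "nonzero_entries A \<equiv> list_all (\<lambda>s. s \<noteq> 0) A"

lemma nonzero_entries_replicate [simp]: "nonzero_entries (replicate k s) \<longleftrightarrow> k = 0 \<or> s \<noteq> 0"
  by (induction k) auto

lemma mzv_term_0 [simp]: "s \<noteq> 0 \<Longrightarrow> mzv_term s 0 = 0"
  by (simp add: mzv_term_def)

lemma mzv_term_of_nat: "mzv_term (int a) n = 1 / real n ^ a"
  by (simp add: mzv_term_def)

lemma mzv_term_one: "mzv_term 1 n = 1 / real n"
  by (simp add: mzv_term_def)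

lemma mzv_term_minus_one: "mzv_term (-1) n = (-1) ^ n / real n"
  by (simp add: mzv_term_def)

lemma abs_mzv_term_le: "s \<noteq> 0 \<Longrightarrow> \<bar>mzv_term s n\<bar> \<le> 1 / real n"
proof (cases "n = 0")
  case False
  assume "s \<noteq> 0"
  then have "real n ^ 1 \<le> real n ^ nat \<bar>s\<bar>"
    using False by (intro power_increasing) auto
  then have "1 / real n ^ nat \<bar>s\<bar> \<le> 1 / real n"
    using False by (intro divide_left_mono) auto
  then show ?thesis
    by (cases "s < 0") (simp_all add: mzv_term_def abs_divide power_abs)
qed simp

text \<open>A bound sqrt n survives one more summation, since sum_{j<n} sqrt j / j = O(sqrt n).\<close>

lemma abs_mzv_partial_le:
  "nonzero_entries A \<Longrightarrow> \<bar>mzv_partial A n\<bar> \<le> 3 ^ length A * sqrt (real n + 1)"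
proof (induction A arbitrary: n)
  case Nil
  show ?case by simp
next
  case (Cons s A)
  have "\<bar>mzv_term s j * mzv_partial A j\<bar> \<le> 3 ^ length A * (sqrt (real j + 1) / real j)" for j
  proof -
    have "\<bar>mzv_term s j\<bar> * \<bar>mzv_partial A j\<bar> \<le> (1 / real j) * (3 ^ length A * sqrt (real j + 1))"
      using Cons by (intro mult_mono abs_mzv_term_le) auto
    then show ?thesis by (simp add: abs_mult)
  qed
  then have "\<bar>mzv_partial (s # A) n\<bar> \<le> (\<Sum>j\<in>{1..<n}. 3 ^ length A * (sqrt (real j + 1) / real j))"
    by (simp add: order_trans[OF sum_abs] sum_mono)
  also have "\<dots> \<le> 3 ^ length A * (3 * sqrt (real n + 1))"
    unfolding sum_distrib_left[symmetric] by (intro mult_left_mono sum_sqrt_Suc_div_le) auto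
  finally show ?case by simp
qed

lemma mzv_partial_replicate_one_nonneg: "mzv_partial (replicate m 1) n \<ge> 0"
  by (induction m arbitrary: n) (auto intro!: sum_nonneg simp: mzv_term_one)

lemma mzv_partial_Cons_Suc:
  "s \<noteq> 0 \<Longrightarrow> mzv_partial (s # A) (Suc n) = (\<Sum>i\<le>n. mzv_term s i * mzv_partial A i)"
  by (simp add: atMost_atLeast0 atLeastLessThanSuc_atLeastAtMost[symmetric] sum.atLeast_Suc_lessThan)

lemma mzv_partial_Cons_eq_sum_lessThan:
  "s \<noteq> 0 \<Longrightarrow> mzv_partial (s # A) N = (\<Sum>n<N. mzv_term s n * mzv_partial A n)"
  using sum_shift_lb_Suc0_0_upt[of "\<lambda>n. mzv_term s n * mzv_partial A n" N]
  by (simp add: atLeast0LessThan)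

lemma abs_alternating_mzv_pair_le:
  assumes A: "nonzero_entries (t # B)" and n: "n \<ge> 1"
  defines "D \<equiv> \<lambda>n. mzv_term (-1) n * mzv_partial (t # B) n"
  shows "\<bar>D n + D (Suc n)\<bar>
    \<le> (3 ^ length (t # B) + 3 ^ length B) * (sqrt (real n + 1) / (real n * (real n + 1)))"
proof -
  define u where "u = real n"
  define b where "b = mzv_partial (t # B) n"
  define d where "d = mzv_term t n * mzv_partial B n"
  have u: "u \<ge> 1" using n by (simp add: u_def)
  have "D n + D (Suc n) = (-1) ^ n * b / u - (-1) ^ n * (b + d) / (u + 1)"
    using n by (simp add: D_def b_def d_def mzv_term_minus_one u_def)
  also have "\<dots> = (-1) ^ n * (b / (u * (u + 1)) - d / (u + 1))"
    using u by (simp add: divide_simps) (simp add: algebra_simps)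
  finally have "\<bar>D n + D (Suc n)\<bar> \<le> \<bar>b\<bar> / (u * (u + 1)) + \<bar>d\<bar> / (u + 1)"
    using u by (simp add: abs_mult abs_triangle_ineq4[THEN order_trans] abs_divide)
  also have "\<dots> \<le> 3 ^ length (t # B) * sqrt (u + 1) / (u * (u + 1))
      + 3 ^ length B * sqrt (u + 1) / u / (u + 1)"
  proof (intro add_mono divide_right_mono)
    show "\<bar>b\<bar> \<le> 3 ^ length (t # B) * sqrt (u + 1)"
      using abs_mzv_partial_le[OF A] by (simp add: b_def u_def)
    show "\<bar>d\<bar> \<le> 3 ^ length B * sqrt (u + 1) / u"
      using A mult_mono[OF abs_mzv_term_le abs_mzv_partial_le, of t B n]
      by (simp add: d_def u_def abs_mult)
  qed (use u in auto)
  also have "\<dots> = (3 ^ length (t # B) + 3 ^ length B) * (sqrt (u + 1) / (u * (u + 1)))"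
    by (simp add: field_simps add_divide_distrib)
  finally show ?thesis by (simp add: u_def)
qed

lemma summable_alternating_mzv_series:
  assumes A: "nonzero_entries A" "A \<noteq> []"
  shows "summable (\<lambda>n. mzv_term (-1) n * mzv_partial A n)"
proof (rule summable_of_summable_add_Suc)
  obtain t B where AtB: "A = t # B" using A(2) by (cases A) auto
  define C :: real where "C = 3 ^ length A + 3 ^ length B"
  let ?D = "\<lambda>n. mzv_term (-1) n * mzv_partial A n"
  show "?D \<longlonglongrightarrow> 0"
  proof (rule Lim_null_comparison)
    have "\<bar>mzv_term (-1) n\<bar> * \<bar>mzv_partial A n\<bar> \<le> (1 / real n) * (3 ^ length A * sqrt (real n + 1))" for n
      by (intro mult_mono abs_mzv_term_le abs_mzv_partial_le A) auto
    then show "eventually (\<lambda>n. norm (?D n) \<le> 3 ^ length A * (sqrt (real n + 1) / real n)) sequentially"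
      by (simp add: abs_mult)
    show "((\<lambda>n. 3 ^ length A * (sqrt (real n + 1) / real n)) \<longlongrightarrow> 0) sequentially"
      by real_asymp
  qed
  show "summable (\<lambda>n. ?D n + ?D (Suc n))"
  proof (rule summable_comparison_test_ev)
    have "summable (\<lambda>n. sqrt (real n + 1) / (real n * (real n + 1)))"
    proof (rule summable_comparison_test_bigo)
      show "summable (\<lambda>n. norm (real n powr (-3/2)))"
        using summable_real_powr_iff[of "-3/2"] by simp
    qed real_asymp
    then show "summable (\<lambda>n. C * (sqrt (real n + 1) / (real n * (real n + 1))))"
      by (rule summable_mult)
    show "eventually (\<lambda>n. norm (?D n + ?D (Suc n))
        \<le> C * (sqrt (real n + 1) / (real n * (real n + 1)))) sequentially"
    proof (rule eventually_mono[OF eventually_ge_at_top[of 1]])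
      show "norm (?D n + ?D (Suc n)) \<le> C * (sqrt (real n + 1) / (real n * (real n + 1)))"
        if "n \<ge> 1" for n
        using abs_alternating_mzv_pair_le[OF _ that, of t B] A(1) by (simp add: AtB C_def)
    qed
  qed
qed

lemma mzv_Cons_eq_suminf:
  assumes "s \<noteq> 0" "summable (\<lambda>n. mzv_term s n * mzv_partial A n)"
  shows "mzv (s # A) = (\<Sum>n. mzv_term s n * mzv_partial A n)"
  unfolding mzv_def mzv_partial_Cons_eq_sum_lessThan[OF assms(1)] suminf_eq_lim ..

section \<open>Multiple polylogarithms with signed entries\<close>

fun Li :: "int list \<Rightarrow> real \<Rightarrow> real" where
  "Li [] z = 1"
| "Li (s # A) z = (\<Sum>n. mzv_term s n * mzv_partial A n * z ^ n)"

lemma summable_norm_Li_series: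
  assumes "s \<noteq> 0" "nonzero_entries A" "\<bar>z\<bar> < 1"
  shows "summable (\<lambda>n. norm (mzv_term s n * mzv_partial A n * z ^ n))"
proof (rule summable_comparison_test)
  have "summable (\<lambda>n. diffs (\<lambda>_. 1) n * \<bar>z\<bar> ^ n)"
    using assms(3) by (intro termdiff_converges[of _ 1]) (auto intro: summable_geometric)
  then show "summable (\<lambda>n. 3 ^ length A * (real (Suc n) * \<bar>z\<bar> ^ n))"
    by (intro summable_mult) (simp add: diffs_def)
  have "norm (mzv_term s n * mzv_partial A n * z ^ n) \<le> 3 ^ length A * (real (Suc n) * \<bar>z\<bar> ^ n)" for n
  proof -
    have "\<bar>mzv_term s n\<bar> \<le> 1"
      using abs_mzv_term_le[OF assms(1)] by (rule order_trans) (cases "n = 0", auto)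
    moreover have "sqrt (real n + 1) \<le> real (Suc n)"
      by (rule real_le_lsqrt) (auto simp: power2_eq_square algebra_simps)
    then have "\<bar>mzv_partial A n\<bar> \<le> 3 ^ length A * real (Suc n)"
      using abs_mzv_partial_le[OF assms(2), of n] by (smt (verit) mult_left_mono zero_le_power)
    ultimately have "\<bar>mzv_term s n\<bar> * \<bar>mzv_partial A n\<bar> \<le> 1 * (3 ^ length A * real (Suc n))"
      by (intro mult_mono) auto
    then show ?thesis
      by (simp add: abs_mult power_abs mult_right_mono flip: mult.assoc)
  qed
  then show "\<exists>N. \<forall>n\<ge>N. norm (norm (mzv_term s n * mzv_partial A n * z ^ n))
      \<le> 3 ^ length A * (real (Suc n) * \<bar>z\<bar> ^ n)"
    by simp
qed

lemma Li_Cons_sums: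
  "s \<noteq> 0 \<Longrightarrow> nonzero_entries A \<Longrightarrow> \<bar>z\<bar> < 1 \<Longrightarrow>
    (\<lambda>n. mzv_term s n * mzv_partial A n * z ^ n) sums Li (s # A) z"
  using summable_sums[OF summable_norm_cancel[OF summable_norm_Li_series]] by simp

lemma Li_minus_one_Cons: "Li ((-1) # A) z = Li (1 # A) (- z)"
  by (simp add: mzv_term_minus_one mzv_term_one power_minus' field_simps)

lemma Li_geometric_sums:
  assumes A: "nonzero_entries A" and w: "\<bar>w\<bar> < 1"
  shows "(\<lambda>n. mzv_partial A (Suc n) * w ^ n) sums (Li A w / (1 - w))"
proof (cases A)
  case Nil
  then show ?thesis using geometric_sums[of w] w by (simp add: divide_inverse)
next
  case (Cons t B)
  then have t: "t \<noteq> 0" and B: "nonzero_entries B" using A by auto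
  let ?d = "\<lambda>i. mzv_term t i * mzv_partial B i"
  have "(\<lambda>n. \<Sum>i\<le>n. ?d i * w ^ i * w ^ (n - i)) sums (Li A w * (\<Sum>n. w ^ n))"
    unfolding Cons Li.simps
    by (rule Cauchy_product_sums[OF summable_norm_Li_series[OF t B w]])
       (use w in \<open>auto intro!: summable_geometric simp: power_abs\<close>)
  moreover have "(\<Sum>i\<le>n. ?d i * w ^ i * w ^ (n - i)) = mzv_partial A (Suc n) * w ^ n" for n
  proof -
    have "(\<Sum>i\<le>n. ?d i * w ^ i * w ^ (n - i)) = (\<Sum>i\<le>n. ?d i * w ^ n)"
      by (intro sum.cong) (auto simp: mult.assoc simp flip: power_add)
    then show ?thesis
      using mzv_partial_Cons_Suc[OF t, of B n]
      by (simp add: Cons sum_distrib_right del: mzv_partial.simps)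
  qed
  ultimately show ?thesis
    using suminf_geometric[of w] w by (simp add: divide_inverse)
qed

lemma Li_Cons_has_derivative_diffs:
  assumes "s \<noteq> 0" "nonzero_entries A" "\<bar>z\<bar> < 1"
  shows "(Li (s # A) has_field_derivative
           (\<Sum>n. diffs (\<lambda>n. mzv_term s n * mzv_partial A n) n * z ^ n)) (at z)"
proof -
  define K where "K = (1 + \<bar>z\<bar>) / 2"
  have K: "\<bar>K\<bar> < 1" "norm z < norm K"
    using assms(3) by (auto simp: K_def)
  have "Li (s # A) = (\<lambda>z. \<Sum>n. mzv_term s n * mzv_partial A n * z ^ n)"
    by auto
  then show ?thesis
    using termdiffs_strong[OF summable_norm_cancel[OF summable_norm_Li_series[OF assms(1,2) K(1)]] K(2)]
    by simp
qed

lemma Li_one_Cons_has_derivative: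
  assumes A: "nonzero_entries A" and z: "\<bar>z\<bar> < 1"
  shows "(Li (1 # A) has_field_derivative Li A z / (1 - z)) (at z)"
proof -
  have "diffs (\<lambda>n. mzv_term 1 n * mzv_partial A n) n = mzv_partial A (Suc n)" for n
    by (simp add: diffs_def mzv_term_one del: of_nat_Suc)
  then have "(\<Sum>n. diffs (\<lambda>n. mzv_term 1 n * mzv_partial A n) n * z ^ n) = Li A z / (1 - z)"
    using sums_unique[OF Li_geometric_sums[OF A z]] by simp
  then show ?thesis
    using Li_Cons_has_derivative_diffs[OF _ A z, of 1] by simp
qed

lemma Li_Suc_Cons_has_derivative:
  assumes a: "a \<ge> 1" and A: "nonzero_entries A" and z: "\<bar>z\<bar> < 1" "z \<noteq> 0"
  shows "(Li (int (Suc a) # A) has_field_derivative Li (int a # A) z / z) (at z)"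
proof -
  let ?f = "\<lambda>n. mzv_term (int a) n * mzv_partial A n * z ^ n"
  have "?f (Suc n) = z * (diffs (\<lambda>n. mzv_term (int (Suc a)) n * mzv_partial A n) n * z ^ n)" for n
  proof -
    have "real (Suc n) * (1 / real (Suc n) ^ Suc a) = 1 / real (Suc n) ^ a"
      by (simp del: of_nat_Suc)
    then show ?thesis
      by (simp add: diffs_def mzv_term_of_nat del: of_nat_Suc)
  qed
  moreover have "?f sums Li (int a # A) z"
    using Li_Cons_sums[OF _ A z(1), of "int a"] a by simp
  then have "(\<lambda>n. ?f (Suc n)) sums Li (int a # A) z"
    using sums_Suc_iff[of ?f] a by simp
  ultimately have "(\<lambda>n. diffs (\<lambda>n. mzv_term (int (Suc a)) n * mzv_partial A n) n * z ^ n)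
      sums (Li (int a # A) z / z)"
    using sums_divide[of _ _ z] z(2) by fastforce
  then show ?thesis
    using Li_Cons_has_derivative_diffs[OF _ A z(1), of "int (Suc a)"] by (simp add: sums_iff)
qed

lemma Li_replicate_one: "\<bar>z\<bar> < 1 \<Longrightarrow> Li (replicate k 1) z = divpow k (Li1 z)"
proof (induction k arbitrary: z)
  case (Suc k)
  define f where "f t = Li (1 # replicate k 1) t - divpow (Suc k) (Li1 t)" for t
  have "(f has_field_derivative 0) (at t)" if "t \<in> {-1<..<1}" for t
  proof -
    have "\<bar>t\<bar> < 1" using that by auto
    have "(f has_field_derivative Li (replicate k 1) t / (1 - t) - divpow k (Li1 t) * (1 / (1 - t))) (at t)"
      unfolding f_def[abs_def] using \<open>\<bar>t\<bar> < 1\<close>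
      by (intro DERIV_diff Li_one_Cons_has_derivative divpow_Suc_has_derivative Li1_has_derivative)
         auto
    then show ?thesis using Suc.IH[OF \<open>\<bar>t\<bar> < 1\<close>] by simp
  qed
  then have "f z = f 0"
    by (intro DERIV_isconst3[of "-1" 1]) (use Suc.prems in auto)
  then show ?case by (simp add: f_def Li1_def divpow_def)
qed (simp add: divpow_def)

lemma Li_half_compl_has_derivative:
  assumes "a \<ge> 1" "nonzero_entries A" "\<bar>x\<bar> < 1"
  shows "((\<lambda>x. Li (int (Suc a) # A) ((1 - x) / 2)) has_field_derivative
           - Li (int a # A) ((1 - x) / 2) / (1 - x)) (at x)"
proof -
  have "((\<lambda>x. Li (int (Suc a) # A) ((1 - x) / 2)) has_field_derivative
      Li (int a # A) ((1 - x) / 2) / ((1 - x) / 2) * (- 1 / 2)) (at x)"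
    using assms
    by (intro DERIV_chain2[OF Li_Suc_Cons_has_derivative]) (auto intro!: derivative_eq_intros)
  then show ?thesis
    using assms by (simp add: field_simps)
qed

lemma Li_replicate_one_Cons_bounds:
  assumes "a \<ge> 1" "0 \<le> y" "y < 1"
  shows "0 \<le> Li (int a # replicate m 1) y" "Li (int a # replicate m 1) y \<le> divpow (Suc m) (Li1 y)"
proof -
  have y: "\<bar>y\<bar> < 1" using assms by auto
  let ?f = "\<lambda>b n. mzv_term (int b) n * mzv_partial (replicate m 1) n * y ^ n"
  have sums: "?f b sums Li (int b # replicate m 1) y" if "b \<ge> 1" for b
    using Li_Cons_sums[OF _ _ y, of "int b" "replicate m 1"] that by simp
  have "0 \<le> ?f a n" "?f a n \<le> ?f 1 n" for n
  proof -
    have "1 / real n ^ a \<le> 1 / real n"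
      using assms(1) by (cases "n = 0") (auto intro!: divide_left_mono simp: self_le_power power_0_left)
    moreover have "0 \<le> mzv_partial (replicate m 1) n * y ^ n"
      using assms mzv_partial_replicate_one_nonneg[of m n] by simp
    ultimately have "1 / real n ^ a * (mzv_partial (replicate m 1) n * y ^ n)
        \<le> 1 / real n ^ 1 * (mzv_partial (replicate m 1) n * y ^ n)"
      by (intro mult_right_mono) auto
    then show "0 \<le> ?f a n" "?f a n \<le> ?f 1 n"
      using \<open>0 \<le> mzv_partial (replicate m 1) n * y ^ n\<close>
      by (simp_all add: mzv_term_of_nat[of a] mzv_term_of_nat[of 1, simplified] mult.assoc)
  qed
  then show "0 \<le> Li (int a # replicate m 1) y" "Li (int a # replicate m 1) y \<le> divpow (Suc m) (Li1 y)"
    using sums_le[OF _ sums sums, of a 1] sums_le[OF _ sums_zero sums, of a] assms(1)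
      Li_replicate_one[OF y, of "Suc m"] by auto
qed

lemma mpl_Cons_eq_Li:
  assumes "a \<ge> 1" "\<forall>s\<in>set ss. s \<ge> 1" "\<bar>x\<bar> < 1"
  shows "mpl (a # ss) x = Li (int a # map int ss) x"
proof -
  let ?f = "\<lambda>n. mzv_term (int a) n * mzv_partial (map int ss) n * x ^ n"
  have "mpl_partial (a # ss) x N = (\<Sum>n<N. ?f n)" for N
    using sum_shift_lb_Suc0_0_upt[of ?f N] assms(1)
    by (simp add: atLeast0LessThan mzv_term_of_nat field_simps)
  moreover have "?f sums Li (int a # map int ss) x"
    using assms by (intro Li_Cons_sums) (auto simp: list_all_iff)
  ultimately show ?thesis
    by (simp add: mpl_def sums_iff suminf_eq_lim)
qed

section \<open>The invariant\<close>

definition Phi :: "nat \<Rightarrow> nat \<Rightarrow> real \<Rightarrow> real" where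
  "Phi k j x = (-1) ^ j * Li (replicate j 1 @ (-1) # replicate k 1) (- x)"

lemma Phi_0: "\<bar>x\<bar> < 1 \<Longrightarrow> Phi k 0 x = divpow (Suc k) (Li1 x)"
  using Li_replicate_one[of x "Suc k"] by (simp add: Phi_def Li_minus_one_Cons del: Li.simps)

lemma Phi_Suc_at_0 [simp]: "Phi k (Suc j) 0 = 0"
  by (simp add: Phi_def)

lemma Phi_0_has_derivative:
  assumes "\<bar>x\<bar> < 1"
  shows "(Phi k 0 has_field_derivative divpow k (Li1 x) / (1 - x)) (at x)"
proof (rule has_field_derivative_transform_within_open[where S = "{-1<..<1}"])
  show "((\<lambda>x. divpow (Suc k) (Li1 x)) has_field_derivative divpow k (Li1 x) / (1 - x)) (at x)"
    using divpow_Suc_has_derivative[OF Li1_has_derivative] assms by fastforce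
qed (use assms Phi_0 in auto)

lemma Phi_Suc_has_derivative:
  assumes "\<bar>x\<bar> < 1"
  shows "(Phi k (Suc j) has_field_derivative Phi k j x / (1 + x)) (at x)"
proof -
  let ?A = "replicate j 1 @ (-1) # replicate k 1"
  have "((\<lambda>x. Li (1 # ?A) (- x)) has_field_derivative Li ?A (- x) / (1 - - x) * - 1) (at x)"
    using assms
    by (intro DERIV_chain2[OF Li_one_Cons_has_derivative]) (auto intro!: derivative_eq_intros)
  then have "((\<lambda>x. (-1) ^ Suc j * Li (1 # ?A) (- x)) has_field_derivative
      (-1) ^ Suc j * (Li ?A (- x) / (1 - - x) * - 1)) (at x)"
    by (rule DERIV_cmult)
  then show ?thesis
    unfolding Phi_def[abs_def] by simp
qed

lemma Phi_nonneg: "0 \<le> x \<Longrightarrow> x < 1 \<Longrightarrow> Phi k j x \<ge> 0"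
proof (induction j arbitrary: x)
  case 0
  then show ?case
    using Phi_0[of x k] Li1_nonneg[of x] divpow_nonneg[of "Li1 x" "Suc k"] by simp
next
  case (Suc j)
  have deriv: "(Phi k (Suc j) has_field_derivative Phi k j t / (1 + t)) (at t)"
    if "0 \<le> t" "t < 1" for t
    using that by (intro Phi_Suc_has_derivative) auto
  show ?case
  proof (cases "x = 0")
    case False
    have "Phi k (Suc j) 0 \<le> Phi k (Suc j) x"
    proof (rule DERIV_nonneg_imp_increasing_open[of 0 x])
      show "\<exists>y. (Phi k (Suc j) has_real_derivative y) (at t) \<and> 0 \<le> y" if "0 < t" "t < x" for t
        using deriv[of t] Suc.IH[of t] that Suc.prems by (intro exI[of _ "Phi k j t / (1 + t)"]) simp
      show "continuous_on {0..x} (Phi k (Suc j))"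
      proof (rule DERIV_continuous_on)
        fix t assume "t \<in> {0..x}"
        then show "(Phi k (Suc j) has_field_derivative Phi k j t / (1 + t)) (at t within {0..x})"
          using deriv[of t] Suc.prems by (auto intro: has_field_derivative_at_within)
      qed
    qed (use Suc.prems False in auto)
    then show ?thesis by simp
  qed simp
qed

definition Psi :: "nat \<Rightarrow> nat \<Rightarrow> real \<Rightarrow> real" where
  "Psi k m x =
     (\<Sum>j\<le>Suc m. divpow j (Li1 ((1 - x) / 2)) * Phi k (Suc m - j) x)
   + (\<Sum>i\<le>k. Li (int (i + 2) # replicate m 1) ((1 - x) / 2) * divpow (k - i) (Li1 x))"

lemma Psi_has_derivative_0:
  assumes x: "\<bar>x\<bar> < 1"
  shows "(Psi k m has_field_derivative 0) (at x)"
proof -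
  let ?u = "\<lambda>x. Li1 ((1 - x) / 2)"
  have "((\<lambda>x. \<Sum>j\<le>Suc m. divpow j (?u x) * Phi k (Suc m - j) x) has_field_derivative
      0 * Phi k (Suc m) x + divpow (Suc m) (?u x) * (divpow k (Li1 x) / (1 - x))) (at x)"
  proof (rule has_derivative_convolution_sum[where r = "1 / (1 + x)"
        and a = "\<lambda>j x. divpow j (?u x)" and b = "\<lambda>j. Phi k j"])
    show "((\<lambda>x. divpow (Suc j) (?u x)) has_field_derivative - (1 / (1 + x)) * divpow j (?u x)) (at x)" for j
      using divpow_Suc_has_derivative[OF Li1_half_compl_has_derivative[OF x]] by simp
    show "(Phi k (Suc j) has_field_derivative 1 / (1 + x) * Phi k j x) (at x)" for j
      using Phi_Suc_has_derivative[OF x] by simp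
  qed (use x Phi_0_has_derivative in auto)
  moreover have "((\<lambda>x. \<Sum>i\<le>k. Li (int (i + 2) # replicate m 1) ((1 - x) / 2) * divpow (k - i) (Li1 x))
      has_field_derivative - divpow (Suc m) (?u x) / (1 - x) * divpow k (Li1 x)
        + Li (int (k + 2) # replicate m 1) ((1 - x) / 2) * 0) (at x)"
  proof (rule has_derivative_convolution_sum[where r = "1 / (1 - x)"
        and a = "\<lambda>i x. Li (int (i + 2) # replicate m 1) ((1 - x) / 2)"
        and b = "\<lambda>i x. divpow i (Li1 x)"])
    have "Li (int 1 # replicate m 1) ((1 - x) / 2) = divpow (Suc m) (?u x)"
      using x Li_replicate_one[of "(1 - x) / 2" "Suc m"] by simp
    then show "((\<lambda>x. Li (int (0 + 2) # replicate m 1) ((1 - x) / 2)) has_field_derivative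
        - divpow (Suc m) (?u x) / (1 - x)) (at x)"
      using Li_half_compl_has_derivative[OF _ _ x, of 1 "replicate m 1"]
      by (simp add: numeral_2_eq_2 del: Li.simps)
    show "((\<lambda>x. Li (int (Suc j + 2) # replicate m 1) ((1 - x) / 2)) has_field_derivative
        - (1 / (1 - x)) * Li (int (j + 2) # replicate m 1) ((1 - x) / 2)) (at x)" for j
      using Li_half_compl_has_derivative[OF _ _ x, of "j + 2"] by simp
    show "((\<lambda>x. divpow (Suc j) (Li1 x)) has_field_derivative 1 / (1 - x) * divpow j (Li1 x)) (at x)" for j
      using divpow_Suc_has_derivative[OF Li1_has_derivative[of x UNIV], of j] x by simp
  qed simp
  ultimately show ?thesis
    \<comment> \<open>both derivatives equal \<plusminus>u^(m+1)/(m+1)! v^k/k! / (1 - x)\<close>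
    unfolding Psi_def[abs_def] using DERIV_add by fastforce
qed

lemma Psi_eq_Li_half:
  assumes "\<bar>x\<bar> < 1"
  shows "Psi k m x = Li (int (k + 2) # replicate m 1) (1 / 2)"
proof -
  have "Psi k m x = Psi k m 0"
    by (rule DERIV_isconst3[of "-1" 1]) (use assms Psi_has_derivative_0 in auto)
  also have "\<dots> = Li (int (k + 2) # replicate m 1) (1 / 2)"
  proof -
    have "Phi k (Suc m - j) 0 = 0" if "j \<le> Suc m" for j
      using that Phi_0[of 0 k] by (cases "j = Suc m") (auto simp: Suc_diff_le Li1_def divpow_def)
    then have "(\<Sum>j\<le>Suc m. divpow j (Li1 ((1 - 0) / 2)) * Phi k (Suc m - j) 0) = 0"
      by simp
    moreover have "(\<Sum>i\<le>k. Li (int (i + 2) # replicate m 1) ((1 - 0) / 2) * divpow (k - i) (Li1 0))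
        = (\<Sum>i\<le>k. if i = k then Li (int (i + 2) # replicate m 1) (1 / 2) else 0)"
      by (intro sum.cong) (auto simp: Li1_def divpow_def simp del: Li.simps)
    ultimately show ?thesis
      by (simp add: Psi_def del: Li.simps)
  qed
  finally show ?thesis .
qed

lemma Psi_eq_Phi_plus:
  assumes "\<bar>x\<bar> < 1"
  shows "Psi k m x = Phi k (Suc m) x
    + (\<Sum>j=1..m. divpow j (Li1 ((1 - x) / 2)) * Phi k (Suc m - j) x)
    + divpow (Suc m) (Li1 ((1 - x) / 2)) * divpow (Suc k) (Li1 x)
    + (\<Sum>i\<le>k. Li (int (i + 2) # replicate m 1) ((1 - x) / 2) * divpow (k - i) (Li1 x))"
proof -
  have "(\<Sum>j\<le>Suc m. divpow j (Li1 ((1 - x) / 2)) * Phi k (Suc m - j) x)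
      = Phi k (Suc m) x + (\<Sum>j=1..m. divpow j (Li1 ((1 - x) / 2)) * Phi k (Suc m - j) x)
        + divpow (Suc m) (Li1 ((1 - x) / 2)) * Phi k 0 x"
    by (simp add: sum.atMost_Suc atMost_atLeast0 sum.atLeast_Suc_atMost)
  then show ?thesis
    using Phi_0[OF assms] by (simp add: Psi_def)
qed

lemma Phi_Suc_le:
  assumes "0 \<le> x" "x < 1"
  shows "Phi k (Suc m) x \<le> Li (int (k + 2) # replicate m 1) (1 / 2)"
proof -
  have x: "\<bar>x\<bar> < 1" and y: "0 \<le> (1 - x) / 2" "(1 - x) / 2 < 1"
    using assms by auto
  have "0 \<le> divpow j (Li1 ((1 - x) / 2))" "0 \<le> divpow j (Li1 x)" for j
    using assms y by (auto intro!: divpow_nonneg Li1_nonneg)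
  moreover have "0 \<le> Li (int (i + 2) # replicate m 1) ((1 - x) / 2)" for i
    using Li_replicate_one_Cons_bounds(1)[OF _ y, of "i + 2" m] by (simp del: Li.simps)
  ultimately have "Phi k (Suc m) x \<le> Psi k m x"
    unfolding Psi_eq_Phi_plus[OF x] using Phi_nonneg[OF assms]
    by (auto intro!: add_nonneg_nonneg sum_nonneg mult_nonneg_nonneg)
  then show ?thesis
    using Psi_eq_Li_half[OF x] by simp
qed

lemma divpow_mult_Phi_Suc_tendsto_0:
  "((\<lambda>x. divpow (Suc j) (Li1 ((1 - x) / 2)) * Phi k (Suc p) x) \<longlongrightarrow> 0) (at_left 1)"
proof (rule tendsto_sandwich)
  let ?u = "\<lambda>x. Li1 ((1 - x) / 2)"
  define B where "B = Li (int (k + 2) # replicate p 1) (1 / 2)"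
  have "0 \<le> divpow (Suc j) (?u x) * Phi k (Suc p) x \<and>
    divpow (Suc j) (?u x) * Phi k (Suc p) x \<le> divpow (Suc j) (?u x) * divpow 0 (Li1 x) * B"
    if "0 < x" "x < 1" for x
    using that Phi_nonneg[of x] Phi_Suc_le[of x k p] Li1_nonneg[of "(1 - x) / 2"]
    by (auto simp: B_def divpow_nonneg mult_left_mono simp del: Li.simps)
  then show "eventually (\<lambda>x. 0 \<le> divpow (Suc j) (?u x) * Phi k (Suc p) x) (at_left 1)"
    "eventually (\<lambda>x. divpow (Suc j) (?u x) * Phi k (Suc p) x
       \<le> divpow (Suc j) (?u x) * divpow 0 (Li1 x) * B) (at_left 1)"
    by (auto intro: eventually_at_left_1)
  show "((\<lambda>x. divpow (Suc j) (?u x) * divpow 0 (Li1 x) * B) \<longlongrightarrow> 0) (at_left 1)"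
    using tendsto_mult_left_zero[OF divpow_Li1_half_compl_tendsto_0] .
qed simp

lemma Li_half_compl_mult_divpow_tendsto_0:
  "((\<lambda>x. Li (int (Suc a) # replicate m 1) ((1 - x) / 2) * divpow p (Li1 x)) \<longlongrightarrow> 0) (at_left 1)"
proof (rule tendsto_sandwich)
  let ?L = "\<lambda>x. Li (int (Suc a) # replicate m 1) ((1 - x) / 2)"
  have "0 \<le> ?L x * divpow p (Li1 x) \<and>
    ?L x * divpow p (Li1 x) \<le> divpow (Suc m) (Li1 ((1 - x) / 2)) * divpow p (Li1 x)"
    if "0 < x" "x < 1" for x
    using that Li_replicate_one_Cons_bounds[of "Suc a" "(1 - x) / 2" m]
      divpow_nonneg[OF Li1_nonneg, of x p]
    by (auto intro: mult_right_mono simp del: Li.simps)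
  then show "eventually (\<lambda>x. 0 \<le> ?L x * divpow p (Li1 x)) (at_left 1)"
    "eventually (\<lambda>x. ?L x * divpow p (Li1 x)
       \<le> divpow (Suc m) (Li1 ((1 - x) / 2)) * divpow p (Li1 x)) (at_left 1)"
    by (auto intro: eventually_at_left_1)
qed (simp_all add: divpow_Li1_half_compl_tendsto_0)

lemma Phi_Suc_tendsto:
  "(Phi k (Suc m) \<longlongrightarrow> Li (int (k + 2) # replicate m 1) (1 / 2)) (at_left 1)"
proof -
  let ?u = "\<lambda>x. Li1 ((1 - x) / 2)"
  let ?C = "Li (int (k + 2) # replicate m 1) (1 / 2)"
  define R where "R x = (\<Sum>j=1..m. divpow j (?u x) * Phi k (Suc m - j) x)
    + divpow (Suc m) (?u x) * divpow (Suc k) (Li1 x)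
    + (\<Sum>i\<le>k. Li (int (i + 2) # replicate m 1) ((1 - x) / 2) * divpow (k - i) (Li1 x))" for x
  have "((\<lambda>x. divpow j (?u x) * Phi k (Suc m - j) x) \<longlongrightarrow> 0) (at_left 1)" if "j \<in> {1..m}" for j
    using that divpow_mult_Phi_Suc_tendsto_0[of "j - 1" k "m - j"] by (simp add: Suc_diff_le)
  moreover have "((\<lambda>x. Li (int (i + 2) # replicate m 1) ((1 - x) / 2) * divpow (k - i) (Li1 x))
      \<longlongrightarrow> 0) (at_left 1)" for i
    using Li_half_compl_mult_divpow_tendsto_0[of "i + 1"] by (simp del: Li.simps)
  ultimately have "(R \<longlongrightarrow> 0 + 0 + 0) (at_left 1)"
    unfolding R_def by (intro tendsto_add tendsto_null_sum divpow_Li1_half_compl_tendsto_0) auto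
  then have "((\<lambda>x. ?C - R x) \<longlongrightarrow> ?C) (at_left 1)"
    using tendsto_diff[OF tendsto_const[of ?C]] by fastforce
  moreover have "eventually (\<lambda>x. ?C - R x = Phi k (Suc m) x) (at_left 1)"
  proof (rule eventually_at_left_1)
    fix x :: real assume "0 < x" "x < 1"
    then have "\<bar>x\<bar> < 1" by simp
    from Psi_eq_Phi_plus[OF this, of k m] Psi_eq_Li_half[OF this, of k m]
    show "?C - R x = Phi k (Suc m) x"
      by (simp add: R_def del: Li.simps)
  qed
  ultimately show ?thesis
    by (rule Lim_transform_eventually)
qed

theorem theorem3p2:
  fixes m k :: nat
  shows "mzv ([-1] @ replicate m 1 @ [-1] @ replicate k 1)
         = (-1) ^ (m + 1) * mpl ((k + 2) # replicate m 1) (1 / 2)"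
proof -
  define A :: "int list" where "A = replicate m 1 @ (-1) # replicate k 1"
  define C where "C = Li (int (k + 2) # replicate m 1) (1 / 2)"
  let ?f = "\<lambda>n. mzv_term (-1) n * mzv_partial A n"
  have "summable ?f"
    by (rule summable_alternating_mzv_series) (auto simp: A_def)
  moreover have "Li ((-1) # A) = (\<lambda>x. \<Sum>n. ?f n * x ^ n)"
    by auto
  ultimately have "(Li ((-1) # A) \<longlongrightarrow> mzv ((-1) # A)) (at_left 1)"
    using Abel_limit_theorem[OF summable_sums] mzv_Cons_eq_suminf[of "-1" A] by simp
  moreover have "Li ((-1) # A) = (\<lambda>x. (-1) ^ (m + 1) * Phi k (Suc m) x)"
    by (simp add: fun_eq_iff Phi_def A_def Li_minus_one_Cons flip: power_add del: Li.simps)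
  then have "(Li ((-1) # A) \<longlongrightarrow> (-1) ^ (m + 1) * C) (at_left 1)"
    unfolding C_def using tendsto_mult_left[OF Phi_Suc_tendsto, of "(-1) ^ (m + 1)" k m] by simp
  ultimately have "mzv ((-1) # A) = (-1) ^ (m + 1) * C"
    using tendsto_unique[OF trivial_limit_at_left_real] by blast
  moreover have "mpl ((k + 2) # replicate m 1) (1 / 2) = C"
    by (simp add: mpl_Cons_eq_Li C_def del: Li.simps)
  ultimately show ?thesis
    by (simp add: A_def)
qed

end
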